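(* Let $E$ be a complex Banach space with the projective approximation property. A metric current $T\in M_k(E)$ is of bidimension $(p,q)$ if and only if it is finitely of bidimension $(p,q)$, i.e. if and only if for every finite-dimensional subspace $V\subset E$ and every continuous linear projection $P:E\to V$ the current $P_\sharp T\in M_k(V)$ is of bidimension $(p,q)$.
   Context: A Banach space $E$ has the projective approximation property if there exist a constant $a$ and a family $\{E_t\}_{t\in\mathcal T}$ of finite-dimensional subspaces, directed by inclusion, with $\bigcup_tE_t$ dense in $E$, and continuous linear projections $p_t:E\to E_t$ with $\|p_t\|\le a$. Metric currents (Ambrosio–Kirchheim) on a complete metric space $Z$: with $\mathscr E^k(Z)=\mathrm{Lip}_b(Z)\times[\mathrm{Lip}(Z)]^k$ (complex-valued), a $k$-dimensional metric current is a multilinear $T:\mathscr E^k(Z)\to\mathbb C$, continuous under pointwise convergence with uniformly bounded Lipschitz constants, local ($T(f,\pi)=0$ if some $\pi_j$ is constant near $\mathrm{supp} f$), and of finite mass (there is a finite Radon measure $\mu$ with $|T(f,\pi)|\le\prod_j\mathrm{Lip}(\pi_j)\int|f|d\mu$); space $M_k(Z)$. Pushforward $P_\sharp T(f,\pi)=T(f\circ P,\pi\circ P)$. On a complex Banach space (or finite-dimensional complex vector space) $Z$, $T\in M_k(Z)$ has bidimension $(p,q)$, $p+q=k$, if $T(f,\pi_1,\dots,\pi_k)=0$ whenever $p+1$ of the $\pi_j$ are holomorphic on an open set containing $\mathrm{supp} f$, or $q+1$ of the $\overline{\pi_j}$ are holomorphic on an open set containing $\mathrm{supp} f$. *)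

theory Defs
  imports "HOL-Analysis.Analysis" "HOL-Probability.Probability"
begin

text \<open>A complex Banach space is a real Banach space E together with a real-linear
  map J (multiplication by the imaginary unit) with J o J = -id, such that the
  complex scalar multiplication  c.x = Re c x + Im c J x  satisfies
  norm (c.x) = cmod c * norm x.\<close>

definition cscale :: "('a::real_vector \<Rightarrow> 'a) \<Rightarrow> complex \<Rightarrow> 'a \<Rightarrow> 'a" where
  "cscale J c x = Re c *\<^sub>R x + Im c *\<^sub>R J x"

definition complex_structure :: "('a::real_normed_vector \<Rightarrow> 'a) \<Rightarrow> bool" where
  "complex_structure J \<longleftrightarrow> linear J \<and> (\<forall>x. J (J x) = - x)
     \<and> (\<forall>c x. norm (cscale J c x) = cmod c * norm x)"

definition csubspace :: "('a::real_vector \<Rightarrow> 'a) \<Rightarrow> 'a set \<Rightarrow> bool" where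
  "csubspace J V \<longleftrightarrow> subspace V \<and> (\<forall>x\<in>V. J x \<in> V)"

definition fin_dim :: "'a::real_vector set \<Rightarrow> bool" where
  "fin_dim V \<longleftrightarrow> (\<exists>B. finite B \<and> V = span B)"

definition clin_projection :: "('a::real_normed_vector \<Rightarrow> 'a) \<Rightarrow> 'a set \<Rightarrow> ('a \<Rightarrow> 'a) \<Rightarrow> bool" where
  "clin_projection J V P \<longleftrightarrow> bounded_linear P \<and> (\<forall>x. P (J x) = J (P x))
     \<and> (\<forall>x. P x \<in> V) \<and> (\<forall>v\<in>V. P v = v)"

text \<open>Projective approximation property. The family {E_t} is represented by the set of
  its members (a set of subspaces), with a chosen projection p E_t for each member.\<close>
definition projective_approx_property :: "('a::real_normed_vector \<Rightarrow> 'a) \<Rightarrow> bool" where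
  "projective_approx_property J \<longleftrightarrow>
    (\<exists>(a::real) (\<E>::'a set set) (p::'a set \<Rightarrow> 'a \<Rightarrow> 'a).
       (\<forall>V\<in>\<E>. csubspace J V \<and> fin_dim V) \<and>
       \<E> \<noteq> {} \<and> (\<forall>V\<in>\<E>. \<forall>W\<in>\<E>. \<exists>U\<in>\<E>. V \<subseteq> U \<and> W \<subseteq> U) \<and>
       closure (\<Union>\<E>) = UNIV \<and>
       (\<forall>V\<in>\<E>. clin_projection J V (p V) \<and> onorm (p V) \<le> a))"

text \<open>A k-current is represented as T f \<pi> with f the bounded Lipschitz function and
  \<pi> a list of length k of Lipschitz functions; values of T outside this domain are
  irrelevant.\<close>

definition lip_fun :: "'a::metric_space set \<Rightarrow> ('a \<Rightarrow> complex) \<Rightarrow> bool" where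
  "lip_fun Z g \<longleftrightarrow> (\<exists>C. C-lipschitz_on Z g)"

definition blip_fun :: "'a::metric_space set \<Rightarrow> ('a \<Rightarrow> complex) \<Rightarrow> bool" where
  "blip_fun Z f \<longleftrightarrow> lip_fun Z f \<and> bounded (f ` Z)"

definition Lip :: "'a::metric_space set \<Rightarrow> ('a \<Rightarrow> complex) \<Rightarrow> real" where
  "Lip Z g = Inf {C. C-lipschitz_on Z g}"

definition dom_ok :: "'a::metric_space set \<Rightarrow> nat \<Rightarrow> ('a \<Rightarrow> complex) \<Rightarrow> ('a \<Rightarrow> complex) list \<Rightarrow> bool" where
  "dom_ok Z k f \<pi> \<longleftrightarrow> blip_fun Z f \<and> length \<pi> = k \<and> (\<forall>g\<in>set \<pi>. lip_fun Z g)"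

definition supp_in :: "'a::metric_space set \<Rightarrow> ('a \<Rightarrow> complex) \<Rightarrow> 'a set" where
  "supp_in Z f = Z \<inter> closure {x\<in>Z. f x \<noteq> 0}"

definition finite_radon_measure :: "'a::metric_space measure \<Rightarrow> bool" where
  "finite_radon_measure \<mu> \<longleftrightarrow> sets \<mu> = sets borel \<and> emeasure \<mu> (space \<mu>) < \<infinity> \<and>
     (\<forall>A\<in>sets borel. emeasure \<mu> A = (SUP K\<in>{K. compact K \<and> K \<subseteq> A}. emeasure \<mu> K))"

definition metric_current :: "nat \<Rightarrow> (('a::metric_space \<Rightarrow> complex) \<Rightarrow> ('a \<Rightarrow> complex) list \<Rightarrow> complex) \<Rightarrow> bool" where
  "metric_current k T \<longleftrightarrow>
    \<comment> \<open>multilinearity\<close>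
    (\<forall>f g \<pi> a b. dom_ok UNIV k f \<pi> \<longrightarrow> blip_fun UNIV g \<longrightarrow>
        T (\<lambda>x. a * f x + b * g x) \<pi> = a * T f \<pi> + b * T g \<pi>) \<and>
    (\<forall>f \<pi> j g h a b. dom_ok UNIV k f \<pi> \<longrightarrow> j < k \<longrightarrow> lip_fun UNIV g \<longrightarrow> lip_fun UNIV h \<longrightarrow>
        T f (\<pi>[j := (\<lambda>x. a * g x + b * h x)]) = a * T f (\<pi>[j := g]) + b * T f (\<pi>[j := h])) \<and>
    \<comment> \<open>continuity\<close>
    (\<forall>f \<pi> \<pi>s. dom_ok UNIV k f \<pi> \<longrightarrow> (\<forall>i. dom_ok UNIV k f (\<pi>s i)) \<longrightarrow>
        (\<forall>j<k. \<forall>x. (\<lambda>i. (\<pi>s i ! j) x) \<longlonglongrightarrow> (\<pi> ! j) x) \<longrightarrow>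
        (\<exists>C. \<forall>i. \<forall>j<k. C-lipschitz_on UNIV (\<pi>s i ! j)) \<longrightarrow>
        (\<lambda>i. T f (\<pi>s i)) \<longlonglongrightarrow> T f \<pi>) \<and>
    \<comment> \<open>locality\<close>
    (\<forall>f \<pi>. dom_ok UNIV k f \<pi> \<longrightarrow>
        (\<exists>j<k. \<exists>U. open U \<and> supp_in UNIV f \<subseteq> U \<and> (\<exists>c. \<forall>x\<in>U. (\<pi> ! j) x = c)) \<longrightarrow>
        T f \<pi> = 0) \<and>
    \<comment> \<open>finite mass\<close>
    (\<exists>\<mu>. finite_radon_measure \<mu> \<and>
       (\<forall>f \<pi>. dom_ok UNIV k f \<pi> \<longrightarrow>
          cmod (T f \<pi>) \<le> (\<Prod>j<k. Lip UNIV (\<pi> ! j)) * (\<integral>x. cmod (f x) \<partial>\<mu>)))"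

definition pushforward ::
  "('a \<Rightarrow> 'b) \<Rightarrow> (('a \<Rightarrow> complex) \<Rightarrow> ('a \<Rightarrow> complex) list \<Rightarrow> complex)
     \<Rightarrow> ('b \<Rightarrow> complex) \<Rightarrow> ('b \<Rightarrow> complex) list \<Rightarrow> complex" where
  "pushforward P T f \<pi> = T (f \<circ> P) (map (\<lambda>g. g \<circ> P) \<pi>)"

text \<open>g is holomorphic on U, a relatively open subset of the complex subspace Z
  (Z = E or a finite-dimensional subspace V): at every point of U it is complex
  Frechet differentiable along Z.\<close>
definition holo_on :: "('a::real_normed_vector \<Rightarrow> 'a) \<Rightarrow> 'a set \<Rightarrow> 'a set \<Rightarrow> ('a \<Rightarrow> complex) \<Rightarrow> bool" where
  "holo_on J Z U g \<longleftrightarrow> (\<forall>x\<in>U. \<exists>L. (g has_derivative L) (at x within Z) \<and>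
      (\<forall>h\<in>Z. L (J h) = \<i> * L h))"

definition bidimension :: "('a::real_normed_vector \<Rightarrow> 'a) \<Rightarrow> 'a set \<Rightarrow> nat \<Rightarrow> nat \<Rightarrow>
    (('a \<Rightarrow> complex) \<Rightarrow> ('a \<Rightarrow> complex) list \<Rightarrow> complex) \<Rightarrow> bool" where
  "bidimension J Z p q T \<longleftrightarrow>
    (\<forall>f \<pi>. dom_ok Z (p + q) f \<pi> \<longrightarrow>
       (\<exists>U. openin (top_of_set Z) U \<and> supp_in Z f \<subseteq> U \<and>
          (p + 1 \<le> card {j. j < p + q \<and> holo_on J Z U (\<pi> ! j)} \<or>
           q + 1 \<le> card {j. j < p + q \<and> holo_on J Z U (\<lambda>x. cnj ((\<pi> ! j) x))})) \<longrightarrow>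
       T f \<pi> = 0)"

end

theory Submission
  imports Defs
begin

text \<open>If \<open>T\<close> has bidimension \<open>(p, q)\<close> then so does every pushforward \<open>P\<^sub>\<sharp>T\<close> under a continuous
  complex-linear projection \<open>P\<close>, because \<open>g \<circ> P\<close> is holomorphic on \<open>P\<inverse>(U)\<close> whenever \<open>g\<close> is
  holomorphic on \<open>U\<close>.

  Conversely, let the tuple \<open>\<pi>\<close> have \<open>p + 1\<close> holomorphic or \<open>q + 1\<close> antiholomorphic entries near the
  support of \<open>f\<close>. The mass measure of \<open>T\<close> is tight, so there are compact sets \<open>K\<^sub>n\<close> carrying all but
  \<open>1/n\<close> of it, and the projective approximation property gives projections \<open>p\<^sub>n\<close> with \<open>\<parallel>p\<^sub>n\<parallel> \<le> a\<close>
  moving \<open>K\<^sub>n\<close> by at most \<open>1/n\<^sup>2\<close>. Interpolating with a Lipschitz cutoff between \<open>p\<^sub>n\<close> near \<open>K\<^sub>n\<close> and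
  the identity far from \<open>K\<^sub>n\<close> yields uniformly Lipschitz maps \<open>r\<^sub>n \<rightarrow> id\<close>, hence
  \<open>T(f, \<pi> \<circ> r\<^sub>n) \<rightarrow> T(f, \<pi>)\<close> by continuity. On the other hand, cutting \<open>f\<close> off near \<open>K\<^sub>n\<close> and using
  locality turns \<open>T(f, \<pi> \<circ> r\<^sub>n)\<close>, up to an error \<open>O(1/n)\<close> controlled by the mass, into a value of
  \<open>(p\<^sub>n)\<^sub>\<sharp>T\<close> on the restriction of \<open>\<pi>\<close> to the image of \<open>p\<^sub>n\<close>, which vanishes by hypothesis.\<close>

lemma metric_current_diff_fun:
  assumes "metric_current k T" "dom_ok UNIV k f \<pi>" "blip_fun UNIV g"
  shows "T (\<lambda>x. f x - g x) \<pi> = T f \<pi> - T g \<pi>"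
proof -
  have "\<forall>f g \<pi> a b. dom_ok UNIV k f \<pi> \<longrightarrow> blip_fun UNIV g \<longrightarrow>
      T (\<lambda>x. a * f x + b * g x) \<pi> = a * T f \<pi> + b * T g \<pi>"
    using assms(1) unfolding metric_current_def by (elim conjE) assumption
  from this[rule_format, OF assms(2,3), of 1 "-1"] show ?thesis by simp
qed

lemma metric_current_diff_arg:
  assumes "metric_current k T" "dom_ok UNIV k f \<pi>" "j < k" "lip_fun UNIV g" "lip_fun UNIV h"
  shows "T f (\<pi>[j := (\<lambda>x. g x - h x)]) = T f (\<pi>[j := g]) - T f (\<pi>[j := h])"
proof -
  have "\<forall>f \<pi> j g h a b. dom_ok UNIV k f \<pi> \<longrightarrow> j < k \<longrightarrow> lip_fun UNIV g \<longrightarrow> lip_fun UNIV h \<longrightarrow>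
      T f (\<pi>[j := (\<lambda>x. a * g x + b * h x)]) = a * T f (\<pi>[j := g]) + b * T f (\<pi>[j := h])"
    using assms(1) unfolding metric_current_def by (elim conjE) assumption
  from this[rule_format, OF assms(2-5), of 1 "-1"] show ?thesis by simp
qed

lemma metric_current_continuous:
  assumes "metric_current k T" "dom_ok UNIV k f \<pi>" "\<And>i. dom_ok UNIV k f (\<pi>s i)"
    and "\<And>j x. j < k \<Longrightarrow> (\<lambda>i. (\<pi>s i ! j) x) \<longlonglongrightarrow> (\<pi> ! j) x"
    and "\<And>i j. j < k \<Longrightarrow> C-lipschitz_on UNIV (\<pi>s i ! j)"
  shows "(\<lambda>i. T f (\<pi>s i)) \<longlonglongrightarrow> T f \<pi>"
proof -
  have "\<forall>f \<pi> \<pi>s. dom_ok UNIV k f \<pi> \<longrightarrow> (\<forall>i. dom_ok UNIV k f (\<pi>s i)) \<longrightarrow>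
      (\<forall>j<k. \<forall>x. (\<lambda>i. (\<pi>s i ! j) x) \<longlonglongrightarrow> (\<pi> ! j) x) \<longrightarrow>
      (\<exists>C. \<forall>i. \<forall>j<k. C-lipschitz_on UNIV (\<pi>s i ! j)) \<longrightarrow>
      (\<lambda>i. T f (\<pi>s i)) \<longlonglongrightarrow> T f \<pi>"
    using assms(1) unfolding metric_current_def by (elim conjE) assumption
  then show ?thesis using assms(2-) by blast
qed

lemma metric_current_local:
  assumes "metric_current k T" "dom_ok UNIV k f \<pi>" "j < k"
    and "open U" "supp_in UNIV f \<subseteq> U" "\<And>x. x \<in> U \<Longrightarrow> (\<pi> ! j) x = c"
  shows "T f \<pi> = 0"
proof -
  have "\<forall>f \<pi>. dom_ok UNIV k f \<pi> \<longrightarrow>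
      (\<exists>j<k. \<exists>U. open U \<and> supp_in UNIV f \<subseteq> U \<and> (\<exists>c. \<forall>x\<in>U. (\<pi> ! j) x = c)) \<longrightarrow>
      T f \<pi> = 0"
    using assms(1) unfolding metric_current_def by (elim conjE) assumption
  moreover have "\<exists>j<k. \<exists>U. open U \<and> supp_in UNIV f \<subseteq> U \<and> (\<exists>c. \<forall>x\<in>U. (\<pi> ! j) x = c)"
    using assms(3-6) by (auto intro!: exI[of _ j] exI[of _ U] exI[of _ c])
  ultimately show ?thesis using assms(2) by blast
qed

definition mass_dominated ::
  "nat \<Rightarrow> (('a::metric_space \<Rightarrow> complex) \<Rightarrow> ('a \<Rightarrow> complex) list \<Rightarrow> complex) \<Rightarrow> 'a measure \<Rightarrow> bool"
where
  "mass_dominated k T \<mu> \<longleftrightarrow> (\<forall>f \<pi>. dom_ok UNIV k f \<pi> \<longrightarrow>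
     cmod (T f \<pi>) \<le> (\<Prod>j<k. Lip UNIV (\<pi> ! j)) * (\<integral>x. cmod (f x) \<partial>\<mu>))"

lemma metric_current_massE:
  assumes "metric_current k T"
  obtains \<mu> where "finite_radon_measure \<mu>" "mass_dominated k T \<mu>"
proof -
  have "\<exists>\<mu>. finite_radon_measure \<mu> \<and> mass_dominated k T \<mu>"
    using assms unfolding metric_current_def mass_dominated_def by (elim conjE) assumption
  then show ?thesis using that by blast
qed

lemma Lip_le: "C-lipschitz_on Z g \<Longrightarrow> Lip Z g \<le> C"
  unfolding Lip_def by (rule cInf_lower) (auto intro: bdd_belowI[where m=0] lipschitz_on_nonneg)

lemma Lip_nonneg: "C-lipschitz_on Z g \<Longrightarrow> 0 \<le> Lip Z g"
  unfolding Lip_def by (rule cInf_greatest) (auto intro: lipschitz_on_nonneg)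

lemma blip_fun_iff:
  "blip_fun Z f \<longleftrightarrow> (\<exists>C. C-lipschitz_on Z f) \<and> (\<exists>B. \<forall>x\<in>Z. cmod (f x) \<le> B)"
  unfolding blip_fun_def lip_fun_def bounded_iff by auto

lemma blip_fun_diff:
  assumes "blip_fun Z f" "blip_fun Z g"
  shows "blip_fun Z (\<lambda>x. f x - g x)"
proof -
  obtain C1 B1 C2 B2 where "C1-lipschitz_on Z f" "\<forall>x\<in>Z. cmod (f x) \<le> B1"
    "C2-lipschitz_on Z g" "\<forall>x\<in>Z. cmod (g x) \<le> B2"
    using assms unfolding blip_fun_iff by blast
  moreover have "\<forall>x\<in>Z. cmod (f x - g x) \<le> B1 + B2"
    using calculation by (smt (verit) norm_triangle_ineq4)
  ultimately show ?thesis
    unfolding blip_fun_iff by (auto intro: lipschitz_on_diff)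
qed

lemma lip_fun_diff: "lip_fun Z g \<Longrightarrow> lip_fun Z h \<Longrightarrow> lip_fun Z (\<lambda>x. g x - h x)"
  unfolding lip_fun_def by (auto intro: lipschitz_on_diff)

lemma lip_fun_set_if_lipschitz:
  "(\<And>j. j < length \<sigma> \<Longrightarrow> L-lipschitz_on Z (\<sigma> ! j)) \<Longrightarrow> \<forall>h\<in>set \<sigma>. lip_fun Z h"
  unfolding lip_fun_def by (metis in_set_conv_nth)

lemma lipschitz_on_common_bound:
  assumes "\<forall>h\<in>set \<pi>. lip_fun Z h"
  obtains L where "0 \<le> L" "\<And>j. j < length \<pi> \<Longrightarrow> L-lipschitz_on Z (\<pi> ! j)"
proof -
  have "\<forall>j. \<exists>c. j < length \<pi> \<longrightarrow> c-lipschitz_on Z (\<pi> ! j)"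
    using assms unfolding lip_fun_def by (metis nth_mem)
  then obtain C where C: "\<And>j. j < length \<pi> \<Longrightarrow> (C j)-lipschitz_on Z (\<pi> ! j)"
    by metis
  have C0: "\<And>j. j \<in> {..<length \<pi>} \<Longrightarrow> 0 \<le> C j" using C lipschitz_on_nonneg by auto
  show ?thesis
  proof
    show "0 \<le> (\<Sum>j<length \<pi>. C j)" using C0 by (rule sum_nonneg)
    show "(\<Sum>j<length \<pi>. C j)-lipschitz_on Z (\<pi> ! j)" if "j < length \<pi>" for j
      using C0 that by (intro lipschitz_on_le[OF C[OF that]] member_le_sum) auto
  qed
qed

lemma lipschitz_on_map_comp:
  assumes "\<And>j. j < length \<pi> \<Longrightarrow> L-lipschitz_on UNIV (\<pi> ! j)" "R-lipschitz_on UNIV r"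
    and "j < length \<pi>"
  shows "(L * R)-lipschitz_on UNIV (map (\<lambda>h. h \<circ> r) \<pi> ! j)"
proof -
  have "L-lipschitz_on (range r) (\<pi> ! j)"
    using assms(1,3) lipschitz_on_subset by blast
  then have "(L * R)-lipschitz_on UNIV ((\<pi> ! j) \<circ> r)"
    by (rule lipschitz_on_compose[OF assms(2)])
  then show ?thesis using assms(3) by simp
qed

lemma current_diff_le_mass:
  assumes "metric_current k T" "mass_dominated k T \<mu>"
    and "dom_ok UNIV k f \<sigma>" "blip_fun UNIV g" "\<And>j. j < k \<Longrightarrow> C-lipschitz_on UNIV (\<sigma> ! j)"
  shows "cmod (T f \<sigma> - T g \<sigma>) \<le> C ^ k * (\<integral>x. cmod (f x - g x) \<partial>\<mu>)"
proof -
  have "dom_ok UNIV k (\<lambda>x. f x - g x) \<sigma>"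
    using assms(3,4) blip_fun_diff unfolding dom_ok_def by blast
  then have "cmod (T f \<sigma> - T g \<sigma>) \<le> (\<Prod>j<k. Lip UNIV (\<sigma> ! j)) * (\<integral>x. cmod (f x - g x) \<partial>\<mu>)"
    using assms(2) metric_current_diff_fun[OF assms(1,3,4)] unfolding mass_dominated_def by metis
  also have "\<dots> \<le> (\<Prod>j<k. C) * (\<integral>x. cmod (f x - g x) \<partial>\<mu>)"
  proof (intro mult_right_mono prod_mono conjI)
    fix j assume "j \<in> {..<k}"
    then have "C-lipschitz_on UNIV (\<sigma> ! j)" using assms(5) by simp
    then show "0 \<le> Lip UNIV (\<sigma> ! j)" "Lip UNIV (\<sigma> ! j) \<le> C"
      by (rule Lip_nonneg, rule Lip_le)
  qed simp
  finally show ?thesis by simp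
qed

lemma finite_radon_measure_sets: "finite_radon_measure \<mu> \<Longrightarrow> sets \<mu> = sets borel"
  unfolding finite_radon_measure_def by (elim conjE)

lemma finite_radon_measure_space: "finite_radon_measure \<mu> \<Longrightarrow> space \<mu> = UNIV"
  using sets_eq_imp_space_eq[OF finite_radon_measure_sets] by simp

lemma finite_radon_measure_finite_measure: "finite_radon_measure \<mu> \<Longrightarrow> finite_measure \<mu>"
  unfolding finite_radon_measure_def by (intro finite_measureI) (simp add: less_top)

lemma finite_radon_measure_closed_sets:
  "finite_radon_measure \<mu> \<Longrightarrow> closed A \<Longrightarrow> A \<in> sets \<mu>"
  by (simp add: finite_radon_measure_sets borel_closed)

lemma finite_radon_measure_compl_compact:
  assumes "finite_radon_measure \<mu>" "compact K"
  shows "K \<in> sets \<mu>" "- K \<in> sets \<mu>"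
proof -
  show K: "K \<in> sets \<mu>"
    using assms by (intro finite_radon_measure_closed_sets compact_imp_closed)
  show "- K \<in> sets \<mu>"
    using sets.compl_sets[OF K] finite_radon_measure_space[OF assms(1)] by (simp add: Compl_eq_Diff_UNIV)
qed

lemma finite_radon_measure_continuous_measurable:
  assumes "finite_radon_measure \<mu>" "continuous_on UNIV g"
  shows "g \<in> borel_measurable \<mu>"
  using borel_measurable_continuous_onI[OF assms(2)] finite_radon_measure_sets[OF assms(1)]
    measurable_cong_sets[of \<mu> borel borel borel]
  by simp

lemma finite_radon_measure_tight:
  fixes \<mu> :: "'a::metric_space measure"
  assumes fr: "finite_radon_measure \<mu>" and "\<epsilon> > 0"
  obtains K where "compact K" "measure \<mu> (- K) < \<epsilon>"
proof (cases "measure \<mu> UNIV < \<epsilon>")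
  case True
  then show ?thesis by (intro that[of "{}"]) simp_all
next
  case False
  interpret finite_measure \<mu> using fr by (rule finite_radon_measure_finite_measure)
  have space: "space \<mu> = UNIV" using fr by (rule finite_radon_measure_space)
  have "ennreal (measure \<mu> UNIV - \<epsilon>) < ennreal (measure \<mu> UNIV)"
    using False \<open>\<epsilon> > 0\<close> by (subst ennreal_less_iff) auto
  also have "\<dots> = emeasure \<mu> UNIV"
    using space emeasure_eq_measure by metis
  also have "\<dots> = (SUP K\<in>{K. compact K \<and> K \<subseteq> UNIV}. emeasure \<mu> K)"
    using fr unfolding finite_radon_measure_def by simp
  finally obtain K where K: "compact K" "ennreal (measure \<mu> UNIV - \<epsilon>) < emeasure \<mu> K"
    by (auto simp: less_SUP_iff)
  have "measure \<mu> (- K) = measure \<mu> UNIV - measure \<mu> K"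
    using finite_measure_compl[OF finite_radon_measure_compl_compact(1)[OF fr K(1)]] space
    by (simp add: Compl_eq_Diff_UNIV)
  moreover have "measure \<mu> UNIV - \<epsilon> < measure \<mu> K"
    using K(2) False \<open>\<epsilon> > 0\<close> by (simp add: emeasure_eq_measure ennreal_less_iff)
  ultimately show ?thesis using K(1) that by auto
qed

lemma integral_le_off_compact:
  fixes g :: "'a::metric_space \<Rightarrow> complex"
  assumes fr: "finite_radon_measure \<mu>" and "continuous_on UNIV g" "compact K"
    and "0 \<le> c\<^sub>1" "0 \<le> c\<^sub>2" and bound: "\<And>x. cmod (g x) \<le> c\<^sub>1 + c\<^sub>2 * indicator (- K) x"
  shows "(\<integral>x. cmod (g x) \<partial>\<mu>) \<le> c\<^sub>1 * measure \<mu> UNIV + c\<^sub>2 * measure \<mu> (- K)"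
proof -
  interpret finite_measure \<mu> using fr by (rule finite_radon_measure_finite_measure)
  have space: "space \<mu> = UNIV" using fr by (rule finite_radon_measure_space)
  have K: "- K \<in> sets \<mu>"
    using fr assms(3) by (rule finite_radon_measure_compl_compact)
  have "integrable \<mu> (indicator (- K) :: 'a \<Rightarrow> real)"
    using K by (intro integrable_real_indicator) (simp_all add: emeasure_eq_measure)
  then have majorant: "integrable \<mu> (\<lambda>x. c\<^sub>1 + c\<^sub>2 * indicator (- K) x :: real)"
    by (intro Bochner_Integration.integrable_add integrable_mult_right) auto
  have "norm (cmod (g x)) \<le> c\<^sub>1 + c\<^sub>2" for x
    using bound[of x] \<open>0 \<le> c\<^sub>2\<close> by (cases "x \<in> K") auto
  then have "integrable \<mu> (\<lambda>x. cmod (g x))"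
    using finite_radon_measure_continuous_measurable[OF fr assms(2)]
    by (intro integrable_const_bound[where B="c\<^sub>1 + c\<^sub>2"]) auto
  then have "(\<integral>x. cmod (g x) \<partial>\<mu>) \<le> (\<integral>x. c\<^sub>1 + c\<^sub>2 * indicator (- K) x \<partial>\<mu>)"
    using majorant bound by (intro integral_mono) auto
  also have "\<dots> = c\<^sub>1 * measure \<mu> UNIV + c\<^sub>2 * measure \<mu> (- K)"
    using K space by (subst Bochner_Integration.integral_add) (auto intro: integrable_real_indicator
        simp: emeasure_eq_measure)
  finally show ?thesis .
qed

section \<open>Approximating projections\<close>

definition approximating_projections ::
  "'a::real_normed_vector set set \<Rightarrow> ('a set \<Rightarrow> 'a \<Rightarrow> 'a) \<Rightarrow> real \<Rightarrow> bool"
where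
  "approximating_projections \<E> p a \<longleftrightarrow>
     \<E> \<noteq> {} \<and> (\<forall>V\<in>\<E>. \<forall>W\<in>\<E>. \<exists>U\<in>\<E>. V \<subseteq> U \<and> W \<subseteq> U) \<and> closure (\<Union>\<E>) = UNIV \<and>
     (\<forall>V\<in>\<E>. bounded_linear (p V) \<and> (\<forall>v\<in>V. p V v = v) \<and> onorm (p V) \<le> a)"

lemma projective_approx_propertyE:
  assumes "projective_approx_property J"
  obtains \<E> p a where "approximating_projections \<E> p a"
    "\<And>V. V \<in> \<E> \<Longrightarrow> csubspace J V \<and> fin_dim V \<and> clin_projection J V (p V)"
proof -
  obtain a \<E> p where "\<forall>V\<in>\<E>. csubspace J V \<and> fin_dim V" "\<E> \<noteq> {}"
    "\<forall>V\<in>\<E>. \<forall>W\<in>\<E>. \<exists>U\<in>\<E>. V \<subseteq> U \<and> W \<subseteq> U" "closure (\<Union>\<E>) = UNIV"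
    "\<forall>V\<in>\<E>. clin_projection J V (p V) \<and> onorm (p V) \<le> a"
    using assms unfolding projective_approx_property_def by blast
  then show ?thesis
    by (intro that[of \<E> p a]) (auto simp: approximating_projections_def clin_projection_def)
qed

lemma approximating_projections_bound_nonneg:
  "approximating_projections \<E> p a \<Longrightarrow> 0 \<le> a"
proof -
  assume ap: "approximating_projections \<E> p a"
  then obtain V where "V \<in> \<E>" unfolding approximating_projections_def by blast
  with ap have "bounded_linear (p V)" "onorm (p V) \<le> a" unfolding approximating_projections_def by auto
  then show "0 \<le> a" using onorm_pos_le[of "p V"] by linarith
qed

lemma norm_proj_diff_le:
  fixes p :: "'a::real_normed_vector \<Rightarrow> 'b::real_normed_vector"
  assumes "bounded_linear p" "onorm p \<le> a"
  shows "norm (p y - y') \<le> a * norm y + norm y'"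
proof -
  have "norm (p y) \<le> a * norm y"
    using onorm[OF assms(1)] assms(2) by (meson mult_right_mono norm_ge_zero order_trans)
  then show ?thesis using norm_triangle_ineq4[of "p y" y'] by linarith
qed

lemma directed_family_contains_finite:
  assumes "finite F" "F \<subseteq> \<Union>\<E>" "\<E> \<noteq> {}"
    and directed: "\<forall>V\<in>\<E>. \<forall>W\<in>\<E>. \<exists>U\<in>\<E>. V \<subseteq> U \<and> W \<subseteq> U"
  shows "\<exists>V\<in>\<E>. F \<subseteq> V"
  using assms(1,2)
proof (induction F rule: finite_induct)
  case empty
  then show ?case using assms(3) by blast
next
  case (insert c F)
  then obtain V W where "V \<in> \<E>" "F \<subseteq> V" "W \<in> \<E>" "c \<in> W" by blast
  moreover obtain U where "U \<in> \<E>" "V \<subseteq> U" "W \<subseteq> U"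
    using directed calculation by blast
  ultimately show ?case by blast
qed

lemma approximating_projections_compact:
  fixes K :: "'a::real_normed_vector set"
  assumes ap: "approximating_projections \<E> p a" and "compact K" "\<eta> > 0"
  obtains V where "V \<in> \<E>" "\<And>x. x \<in> K \<Longrightarrow> norm (p V x - x) \<le> \<eta>"
proof -
  have a: "0 \<le> a" using ap by (rule approximating_projections_bound_nonneg)
  define r where "r = \<eta> / (a + 1)"
  have "r > 0" using \<open>\<eta> > 0\<close> a by (simp add: r_def)
  have cover: "K \<subseteq> (\<Union>c\<in>\<Union>\<E>. ball c r)"
  proof
    fix x assume "x \<in> K"
    have "x \<in> closure (\<Union>\<E>)" using ap unfolding approximating_projections_def by simp
    then obtain c where "c \<in> \<Union>\<E>" "dist c x < r" using closure_approachable \<open>r > 0\<close> by metis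
    then show "x \<in> (\<Union>c\<in>\<Union>\<E>. ball c r)" by auto
  qed
  then obtain C where C: "C \<subseteq> \<Union>\<E>" "finite C" "K \<subseteq> (\<Union>c\<in>C. ball c r)"
    using compactE_image[OF \<open>compact K\<close> _ cover] by blast
  have "\<exists>V\<in>\<E>. C \<subseteq> V"
    using ap C(1,2) unfolding approximating_projections_def by (intro directed_family_contains_finite) auto
  then obtain V where V: "V \<in> \<E>" "C \<subseteq> V" by blast
  have "norm (p V x - x) \<le> \<eta>" if "x \<in> K" for x
  proof -
    obtain c where c: "c \<in> C" "dist c x < r" using C(3) \<open>x \<in> K\<close> by auto
    have "bounded_linear (p V)" "onorm (p V) \<le> a" "p V c = c"
      using ap V c unfolding approximating_projections_def by auto
    then have "p V x - x = p V (x - c) - (x - c)"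
      by (simp add: linear_diff bounded_linear.linear algebra_simps)
    then have "norm (p V x - x) \<le> (a + 1) * norm (x - c)"
      using norm_proj_diff_le[OF \<open>bounded_linear (p V)\<close> \<open>onorm (p V) \<le> a\<close>, of "x - c" "x - c"]
      by (simp add: algebra_simps)
    also have "\<dots> \<le> (a + 1) * r" using c a by (simp add: dist_norm norm_minus_commute)
    finally show ?thesis using a by (simp add: r_def)
  qed
  with V that show ?thesis by blast
qed

lemma approximating_projections_tight:
  assumes fr: "finite_radon_measure \<mu>" and ap: "approximating_projections \<E> p a" and "\<delta> > 0"
  obtains K V where "compact K" "K \<noteq> {}" "measure \<mu> (- K) \<le> \<delta>" "V \<in> \<E>"
    "\<And>x. x \<in> K \<Longrightarrow> norm (p V x - x) \<le> \<delta>\<^sup>2"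
proof -
  obtain K where K: "compact K" "measure \<mu> (- K) < \<delta>"
    using finite_radon_measure_tight[OF fr \<open>\<delta> > 0\<close>] by blast
  have "measure \<mu> (- insert 0 K) \<le> measure \<mu> (- K)"
    using finite_radon_measure_compl_compact[OF fr K(1)]
    by (intro finite_measure.finite_measure_mono[OF finite_radon_measure_finite_measure[OF fr]]) auto
  moreover obtain V where "V \<in> \<E>" "\<And>x. x \<in> insert 0 K \<Longrightarrow> norm (p V x - x) \<le> \<delta>\<^sup>2"
    using approximating_projections_compact[OF ap, of "insert 0 K" "\<delta>\<^sup>2"] K(1) \<open>\<delta> > 0\<close> by auto
  ultimately show ?thesis
    using that[of "insert 0 K" V] K by auto
qed

section \<open>Cutoff functions\<close>

definition cutoff :: "'a::metric_space set \<Rightarrow> real \<Rightarrow> real \<Rightarrow> 'a \<Rightarrow> real" where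
  "cutoff K r s x = max 0 (min 1 ((s - infdist x K) / (s - r)))"

lemma cutoff_nonneg: "0 \<le> cutoff K r s x"
  and cutoff_le_one: "cutoff K r s x \<le> 1"
  unfolding cutoff_def by auto

lemma cutoff_eq_one: "r < s \<Longrightarrow> infdist x K \<le> r \<Longrightarrow> cutoff K r s x = 1"
  unfolding cutoff_def by (simp add: field_simps)

lemma cutoff_eq_zero: "r < s \<Longrightarrow> s \<le> infdist x K \<Longrightarrow> cutoff K r s x = 0"
  unfolding cutoff_def by (simp add: field_simps)

lemma cutoff_lipschitz:
  assumes "r < s"
  shows "(1 / (s - r))-lipschitz_on S (cutoff K r s)"
proof (rule lipschitz_onI)
  fix x y
  have "\<bar>cutoff K r s x - cutoff K r s y\<bar> \<le> \<bar>(s - infdist x K) / (s - r) - (s - infdist y K) / (s - r)\<bar>"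
    unfolding cutoff_def by (simp add: max_def min_def abs_if)
  also have "\<dots> = \<bar>infdist x K - infdist y K\<bar> / (s - r)"
    using assms by (simp add: diff_divide_distrib[symmetric] abs_minus_commute)
  also have "\<dots> \<le> dist x y / (s - r)"
    using assms by (intro divide_right_mono infdist_triangle_abs) auto
  finally show "dist (cutoff K r s x) (cutoff K r s y) \<le> 1 / (s - r) * dist x y"
    by (simp add: dist_real_def)
qed (use assms in simp)

lemma infdist_lessE:
  fixes K :: "'a::metric_space set"
  assumes "K \<noteq> {}" "infdist x K < d"
  obtains z where "z \<in> K" "dist x z < d"
proof -
  have "(INF z\<in>K. dist x z) < d" using assms infdist_notempty by metis
  then show ?thesis
    using assms(1) that by (subst (asm) cINF_less_iff) (auto intro: bdd_belowI[where m=0])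
qed

lemma lipschitz_on_mult_cutoff:
  fixes f :: "'a::metric_space \<Rightarrow> complex" and \<psi> :: "'a \<Rightarrow> real"
  assumes "L\<^sub>f-lipschitz_on S f" "\<And>x. x \<in> S \<Longrightarrow> cmod (f x) \<le> B"
    and "L\<^sub>\<psi>-lipschitz_on S \<psi>" "\<And>x. x \<in> S \<Longrightarrow> \<bar>\<psi> x\<bar> \<le> 1" "0 \<le> B"
  shows "(L\<^sub>f + B * L\<^sub>\<psi>)-lipschitz_on S (\<lambda>x. f x * of_real (\<psi> x))"
proof (rule lipschitz_onI)
  fix x y assume xy: "x \<in> S" "y \<in> S"
  have "f x * of_real (\<psi> x) - f y * of_real (\<psi> y) = (f x - f y) * of_real (\<psi> x) + f y * of_real (\<psi> x - \<psi> y)"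
    by (simp add: algebra_simps)
  then have "cmod (f x * of_real (\<psi> x) - f y * of_real (\<psi> y)) \<le> cmod (f x - f y) * \<bar>\<psi> x\<bar> + cmod (f y) * \<bar>\<psi> x - \<psi> y\<bar>"
    by (metis norm_triangle_ineq norm_mult norm_of_real)
  also have "\<dots> \<le> (L\<^sub>f * dist x y) * 1 + B * (L\<^sub>\<psi> * dist x y)"
    using assms xy lipschitz_onD[OF assms(1) xy] lipschitz_onD[OF assms(3) xy] lipschitz_on_nonneg[OF assms(1)]
    by (intro add_mono mult_mono) (auto simp: dist_norm dist_real_def)
  finally show "dist (f x * of_real (\<psi> x)) (f y * of_real (\<psi> y)) \<le> (L\<^sub>f + B * L\<^sub>\<psi>) * dist x y"
    by (simp add: dist_norm algebra_simps)
qed (use assms(5) lipschitz_on_nonneg[OF assms(1)] lipschitz_on_nonneg[OF assms(3)] in simp)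

definition cut_near :: "'a::metric_space set \<Rightarrow> real \<Rightarrow> ('a \<Rightarrow> complex) \<Rightarrow> 'a \<Rightarrow> complex" where
  "cut_near K \<delta> f x = f x * of_real (cutoff K 0 (\<delta> / 4) x)"

lemma cut_near_lipschitz:
  assumes "L\<^sub>f-lipschitz_on UNIV f" "\<And>x. cmod (f x) \<le> B" "0 < \<delta>"
  shows "(L\<^sub>f + B * (4 / \<delta>))-lipschitz_on UNIV (cut_near K \<delta> f)"
proof -
  have "0 \<le> B" using assms(2)[of undefined] norm_ge_zero order_trans by blast
  moreover have "(4 / \<delta>)-lipschitz_on UNIV (cutoff K 0 (\<delta> / 4))"
    using cutoff_lipschitz[of 0 "\<delta> / 4" UNIV K] assms(3) by simp
  ultimately show ?thesis
    unfolding cut_near_def using assms(1,2) cutoff_nonneg[of K 0 "\<delta> / 4"] cutoff_le_one[of K 0 "\<delta> / 4"]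
    by (intro lipschitz_on_mult_cutoff) auto
qed

lemma norm_cut_near_le:
  assumes "\<And>x. cmod (f x) \<le> B"
  shows "cmod (cut_near K \<delta> f x) \<le> B"
proof -
  have "0 \<le> B" using assms[of x] norm_ge_zero order_trans by blast
  then show ?thesis
    using mult_mono[OF assms cutoff_le_one _ cutoff_nonneg, of x K 0 "\<delta> / 4" x]
      cutoff_nonneg[of K 0 "\<delta> / 4" x]
    by (simp add: cut_near_def norm_mult)
qed

lemma norm_diff_cut_near_le:
  assumes "\<And>x. cmod (f x) \<le> B" "0 < \<delta>"
  shows "cmod (f x - cut_near K \<delta> f x) \<le> B * indicator (- K) x"
proof (cases "x \<in> K")
  case False
  let ?\<psi> = "cutoff K 0 (\<delta> / 4) x"
  have "f x - cut_near K \<delta> f x = f x * of_real (1 - ?\<psi>)" by (simp add: cut_near_def algebra_simps)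
  then have "cmod (f x - cut_near K \<delta> f x) = cmod (f x) * (1 - ?\<psi>)"
    using cutoff_le_one[of K 0 "\<delta> / 4" x] by (simp only: norm_mult norm_of_real)
  also have "\<dots> \<le> B * 1"
    using assms(1)[of x] cutoff_nonneg[of K 0 "\<delta> / 4" x] cutoff_le_one[of K 0 "\<delta> / 4" x]
    by (intro mult_mono) (auto intro: order_trans[OF norm_ge_zero])
  finally show ?thesis using False by simp
qed (use assms(2) in \<open>simp add: cut_near_def cutoff_eq_one\<close>)

lemma supp_in_cut_near:
  assumes "0 < \<delta>"
  shows "supp_in UNIV (cut_near K \<delta> f) \<subseteq> {x. infdist x K < \<delta>}"
proof -
  have "{x. cut_near K \<delta> f x \<noteq> 0} \<subseteq> {x. infdist x K \<le> \<delta> / 4}"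
    using assms cutoff_eq_zero[of 0 "\<delta> / 4" _ K] by (force simp: cut_near_def)
  then have "closure {x. cut_near K \<delta> f x \<noteq> 0} \<subseteq> {x. infdist x K \<le> \<delta> / 4}"
    by (intro closure_minimal closed_Collect_le continuous_intros)
  then show ?thesis using assms unfolding supp_in_def by auto
qed

section \<open>A Lipschitz interpolation between a projection and the identity\<close>

definition proj_near :: "'a::real_normed_vector set \<Rightarrow> real \<Rightarrow> ('a \<Rightarrow> 'a) \<Rightarrow> 'a \<Rightarrow> 'a" where
  "proj_near K \<delta> p x = x + cutoff K \<delta> (2 * \<delta>) x *\<^sub>R (p x - x)"

locale proj_near_setup =
  fixes K :: "'a::real_normed_vector set" and p :: "'a \<Rightarrow> 'a" and a e \<delta> :: real
  assumes bounded_linear: "bounded_linear p" and onorm_le: "onorm p \<le> a"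
    and nonempty: "K \<noteq> {}" and moves_K: "\<And>z. z \<in> K \<Longrightarrow> norm (p z - z) \<le> e"
    and e_le: "e \<le> \<delta>" and pos: "0 < \<delta>"
begin

abbreviation \<phi> where "\<phi> \<equiv> cutoff K \<delta> (2 * \<delta>)"

lemma bound_nonneg: "0 \<le> a"
  using onorm_pos_le[OF bounded_linear] onorm_le by linarith

lemma e_nonneg: "0 \<le> e"
  using nonempty moves_K norm_ge_zero order_trans by blast

lemma displacement_diff_le: "norm ((p x - x) - (p y - y)) \<le> (a + 1) * dist x y"
proof -
  have "(p x - x) - (p y - y) = p (x - y) - (x - y)"
    using bounded_linear by (simp add: linear_diff bounded_linear.linear algebra_simps)
  then show ?thesis
    using norm_proj_diff_le[OF bounded_linear onorm_le, of "x - y" "x - y"]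
    by (simp add: dist_norm algebra_simps)
qed

lemma displacement_le_near_K:
  assumes "infdist y K < 2 * \<delta>"
  shows "norm (p y - y) \<le> 2 * (a + 1) * \<delta> + e"
proof -
  obtain z where z: "z \<in> K" "dist y z < 2 * \<delta>"
    using infdist_lessE[OF nonempty assms] by blast
  have "norm (p y - y) \<le> norm ((p y - y) - (p z - z)) + norm (p z - z)"
    using norm_triangle_ineq[of "(p y - y) - (p z - z)" "p z - z"] by simp
  also have "\<dots> \<le> (a + 1) * dist y z + e"
    using displacement_diff_le moves_K[OF z(1)] by (rule add_mono)
  also have "\<dots> \<le> (a + 1) * (2 * \<delta>) + e"
    using z bound_nonneg by (intro add_right_mono mult_left_mono) auto
  finally show ?thesis by (simp add: algebra_simps)
qed

lemma scaled_displacement_diff_le: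
  assumes "\<phi> y \<noteq> 0"
  shows "norm (\<phi> x *\<^sub>R (p x - x) - \<phi> y *\<^sub>R (p y - y)) \<le> (3 * a + 4) * dist x y"
proof -
  have near: "infdist y K < 2 * \<delta>"
    using assms pos cutoff_eq_zero[of \<delta> "2 * \<delta>" y K] by force
  have "\<phi> x *\<^sub>R (p x - x) - \<phi> y *\<^sub>R (p y - y) = \<phi> x *\<^sub>R ((p x - x) - (p y - y)) + (\<phi> x - \<phi> y) *\<^sub>R (p y - y)"
    by (simp add: algebra_simps)
  then have "norm (\<phi> x *\<^sub>R (p x - x) - \<phi> y *\<^sub>R (p y - y))
      \<le> \<bar>\<phi> x\<bar> * norm ((p x - x) - (p y - y)) + \<bar>\<phi> x - \<phi> y\<bar> * norm (p y - y)"
    by (metis norm_triangle_ineq norm_scaleR)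
  also have "\<dots> \<le> 1 * ((a + 1) * dist x y) + (dist x y / \<delta>) * (2 * (a + 1) * \<delta> + e)"
  proof (intro add_mono mult_mono)
    show "\<bar>\<phi> x - \<phi> y\<bar> \<le> dist x y / \<delta>"
      using lipschitz_onD[OF cutoff_lipschitz[of \<delta> "2 * \<delta>" UNIV K], of x y] pos
      by (simp add: dist_real_def)
  qed (use cutoff_nonneg[of K \<delta> "2 * \<delta>" x] cutoff_le_one[of K \<delta> "2 * \<delta>" x] pos
      displacement_diff_le displacement_le_near_K[OF near] in auto)
  also have "\<dots> = (3 * a + 3) * dist x y + dist x y * (e / \<delta>)"
    using pos by (simp add: field_simps)
  also have "\<dots> \<le> (3 * a + 3) * dist x y + dist x y * 1"
    using e_le pos by (intro add_left_mono mult_left_mono) auto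
  finally show ?thesis by (simp add: algebra_simps)
qed

lemma proj_near_lipschitz: "(3 * a + 5)-lipschitz_on UNIV (proj_near K \<delta> p)"
proof (rule lipschitz_onI)
  fix x y :: 'a
  have scaled: "norm (\<phi> x *\<^sub>R (p x - x) - \<phi> y *\<^sub>R (p y - y)) \<le> (3 * a + 4) * dist x y"
  proof (cases "\<phi> y = 0")
    case True
    show ?thesis
    proof (cases "\<phi> x = 0")
      case False
      then show ?thesis
        using scaled_displacement_diff_le[of x y] by (simp add: norm_minus_commute dist_commute)
    qed (use True bound_nonneg in simp)
  qed (rule scaled_displacement_diff_le)
  have "proj_near K \<delta> p x - proj_near K \<delta> p y = (x - y) + (\<phi> x *\<^sub>R (p x - x) - \<phi> y *\<^sub>R (p y - y))"
    unfolding proj_near_def by (simp add: algebra_simps)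
  then have "dist (proj_near K \<delta> p x) (proj_near K \<delta> p y)
      = norm ((x - y) + (\<phi> x *\<^sub>R (p x - x) - \<phi> y *\<^sub>R (p y - y)))"
    by (simp add: dist_norm)
  also have "\<dots> \<le> dist x y + (3 * a + 4) * dist x y"
    using norm_triangle_ineq[of "x - y" "\<phi> x *\<^sub>R (p x - x) - \<phi> y *\<^sub>R (p y - y)"] scaled
    unfolding dist_norm by linarith
  finally show "dist (proj_near K \<delta> p x) (proj_near K \<delta> p y) \<le> (3 * a + 5) * dist x y"
    by (simp add: algebra_simps)
qed (use bound_nonneg in simp)

lemma proj_near_dist_le: "norm (proj_near K \<delta> p x - x) \<le> (2 * a + 3) * \<delta>"
proof (cases "\<phi> x = 0")
  case True
  then show ?thesis using bound_nonneg pos by (simp add: proj_near_def)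
next
  case False
  then have "infdist x K < 2 * \<delta>"
    using pos cutoff_eq_zero[of \<delta> "2 * \<delta>" x K] by force
  then have "norm (p x - x) \<le> 2 * (a + 1) * \<delta> + \<delta>"
    using displacement_le_near_K e_le by fastforce
  then have "\<phi> x * norm (p x - x) \<le> 1 * ((2 * a + 3) * \<delta>)"
    using cutoff_nonneg cutoff_le_one by (intro mult_mono) (auto simp: algebra_simps)
  then show ?thesis using cutoff_nonneg[of K \<delta> "2 * \<delta>" x] by (simp add: proj_near_def)
qed

lemma proj_near_eq: "infdist x K \<le> \<delta> \<Longrightarrow> proj_near K \<delta> p x = p x"
  using cutoff_eq_one[of \<delta> "2 * \<delta>" x K] pos by (simp add: proj_near_def)

end

section \<open>Bidimension\<close>

definition holo_degenerate ::
  "('a::real_normed_vector \<Rightarrow> 'a) \<Rightarrow> 'a set \<Rightarrow> nat \<Rightarrow> nat \<Rightarrow> 'a set \<Rightarrow> ('a \<Rightarrow> complex) list \<Rightarrow> bool"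
where
  "holo_degenerate J Z p q U \<pi> \<longleftrightarrow>
     p + 1 \<le> card {j. j < p + q \<and> holo_on J Z U (\<pi> ! j)} \<or>
     q + 1 \<le> card {j. j < p + q \<and> holo_on J Z U (\<lambda>x. cnj ((\<pi> ! j) x))}"

lemma bidimensionI:
  assumes "\<And>f \<pi> U. dom_ok Z (p + q) f \<pi> \<Longrightarrow> openin (top_of_set Z) U \<Longrightarrow> supp_in Z f \<subseteq> U \<Longrightarrow>
      holo_degenerate J Z p q U \<pi> \<Longrightarrow> T f \<pi> = 0"
  shows "bidimension J Z p q T"
  using assms unfolding bidimension_def holo_degenerate_def by blast

lemma bidimensionD:
  assumes "bidimension J Z p q T" "dom_ok Z (p + q) f \<pi>" "openin (top_of_set Z) U"
    "supp_in Z f \<subseteq> U" "holo_degenerate J Z p q U \<pi>"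
  shows "T f \<pi> = 0"
  using assms unfolding bidimension_def holo_degenerate_def by blast

lemma holo_degenerate_comp:
  assumes "holo_degenerate J Z p q U \<pi>" "length \<pi> = p + q"
    and holo: "\<And>g. holo_on J Z U g \<Longrightarrow> holo_on J Z' U' (g \<circ> Q)"
  shows "holo_degenerate J Z' p q U' (map (\<lambda>g. g \<circ> Q) \<pi>)"
proof -
  have "card {j. j < p + q \<and> holo_on J Z U (\<pi> ! j)}
      \<le> card {j. j < p + q \<and> holo_on J Z' U' (map (\<lambda>g. g \<circ> Q) \<pi> ! j)}"
    using assms(2) holo by (intro card_mono) auto
  moreover have "card {j. j < p + q \<and> holo_on J Z U (\<lambda>x. cnj ((\<pi> ! j) x))}
      \<le> card {j. j < p + q \<and> holo_on J Z' U' (\<lambda>x. cnj ((map (\<lambda>g. g \<circ> Q) \<pi> ! j) x))}"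
    using assms(2) holo[of "\<lambda>x. cnj ((\<pi> ! _) x)"] by (intro card_mono) (auto simp: comp_def)
  ultimately show ?thesis
    using assms(1) unfolding holo_degenerate_def by linarith
qed

lemma holo_on_restrict: "holo_on J UNIV U h \<Longrightarrow> holo_on J V (U \<inter> V) h"
  unfolding holo_on_def by (meson IntD1 UNIV_I has_derivative_subset subset_UNIV)

lemma holo_on_comp_clin_projection:
  assumes holo: "holo_on J V U g" and P: "clin_projection J V P"
  shows "holo_on J UNIV (P -` U) (g \<circ> P)"
  unfolding holo_on_def
proof
  fix x assume "x \<in> P -` U"
  have "bounded_linear P" and PJ: "\<And>x. P (J x) = J (P x)" and PV: "\<And>x. P x \<in> V"
    using P unfolding clin_projection_def by auto
  obtain L where L: "(g has_derivative L) (at (P x) within V)" "\<forall>h\<in>V. L (J h) = \<i> * L h"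
    using holo \<open>x \<in> P -` U\<close> unfolding holo_on_def by auto
  have "(g has_derivative L) (at (P x) within range P)"
    using PV by (intro has_derivative_subset[OF L(1)]) auto
  then have "(g \<circ> P has_derivative L \<circ> P) (at x)"
    using bounded_linear_imp_has_derivative[OF \<open>bounded_linear P\<close>] diff_chain_within by blast
  moreover have "\<forall>h\<in>UNIV. (L \<circ> P) (J h) = \<i> * (L \<circ> P) h"
    using L(2) PJ PV by simp
  ultimately show "\<exists>L. (g \<circ> P has_derivative L) (at x within UNIV) \<and> (\<forall>h\<in>UNIV. L (J h) = \<i> * L h)"
    by blast
qed

lemma lip_fun_comp_bounded_linear:
  assumes "lip_fun V g" "bounded_linear P" "range P \<subseteq> V"
  shows "lip_fun UNIV (g \<circ> P)"
proof -
  obtain C where "C-lipschitz_on V g" using assms(1) unfolding lip_fun_def by blast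
  then have "C-lipschitz_on (range P) g" using assms(3) by (rule lipschitz_on_subset)
  moreover obtain B where "B-lipschitz_on UNIV P"
    using bounded_linear.lipschitz_boundE[OF assms(2)] by blast
  ultimately have "(C * B)-lipschitz_on UNIV (g \<circ> P)" by (intro lipschitz_on_compose)
  then show ?thesis unfolding lip_fun_def by blast
qed

lemma dom_ok_comp_bounded_linear:
  assumes "dom_ok V k f \<pi>" "bounded_linear P" "range P \<subseteq> V"
  shows "dom_ok UNIV k (f \<circ> P) (map (\<lambda>g. g \<circ> P) \<pi>)"
proof -
  have "bounded ((f \<circ> P) ` UNIV)"
    using assms(1,3) unfolding dom_ok_def blip_fun_def by (metis bounded_subset image_comp image_mono)
  then show ?thesis
    using assms lip_fun_comp_bounded_linear unfolding dom_ok_def blip_fun_def by auto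
qed

lemma supp_in_comp_subset:
  assumes "\<And>x. isCont P x" "range P \<subseteq> V" "supp_in V f \<subseteq> U"
  shows "supp_in UNIV (f \<circ> P) \<subseteq> P -` U"
proof -
  let ?S = "closure {y\<in>V. f y \<noteq> 0}"
  have "closed (P -` ?S)" using assms(1) by (intro continuous_closed_vimage) auto
  moreover have "{x\<in>UNIV. (f \<circ> P) x \<noteq> 0} \<subseteq> P -` ?S" using assms(2) closure_subset by fastforce
  ultimately have "closure {x\<in>UNIV. (f \<circ> P) x \<noteq> 0} \<subseteq> P -` ?S" by (rule closure_minimal[rotated])
  then show ?thesis using assms(2,3) unfolding supp_in_def by blast
qed

lemma bidimension_pushforward:
  assumes bd: "bidimension J UNIV p q T" and P: "clin_projection J V P"
  shows "bidimension J V p q (pushforward P T)"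
proof (rule bidimensionI)
  fix f \<pi> U assume f: "dom_ok V (p + q) f \<pi>" and U: "openin (top_of_set V) U" "supp_in V f \<subseteq> U"
    and degenerate: "holo_degenerate J V p q U \<pi>"
  have "bounded_linear P" "range P \<subseteq> V" using P unfolding clin_projection_def by auto
  then have cont: "\<And>x. isCont P x" by (simp add: linear_continuous_at)
  obtain W where W: "open W" "U = V \<inter> W" using U(1) openin_open by metis
  have "P -` U = P -` W" using W(2) \<open>range P \<subseteq> V\<close> by auto
  have "dom_ok UNIV (p + q) (f \<circ> P) (map (\<lambda>g. g \<circ> P) \<pi>)"
    using f \<open>bounded_linear P\<close> \<open>range P \<subseteq> V\<close> by (rule dom_ok_comp_bounded_linear)
  moreover have "openin (top_of_set UNIV) (P -` U)"
    using \<open>P -` U = P -` W\<close> continuous_open_vimage[OF W(1) cont] by simp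
  moreover have "supp_in UNIV (f \<circ> P) \<subseteq> P -` U"
    using cont \<open>range P \<subseteq> V\<close> U(2) by (rule supp_in_comp_subset)
  moreover have "holo_degenerate J UNIV p q (P -` U) (map (\<lambda>g. g \<circ> P) \<pi>)"
    using degenerate _ holo_on_comp_clin_projection[OF _ P]
  proof (rule holo_degenerate_comp)
    show "length \<pi> = p + q" using f unfolding dom_ok_def by simp
  qed
  ultimately have "T (f \<circ> P) (map (\<lambda>g. g \<circ> P) \<pi>) = 0" by (rule bidimensionD[OF bd])
  then show "pushforward P T f \<pi> = 0" unfolding pushforward_def .
qed

section \<open>Finitely of bidimension \<open>(p, q)\<close> implies bidimension \<open>(p, q)\<close>\<close>

lemma take_append_drop_update:
  assumes "n < length \<sigma>" "length \<tau> = length \<sigma>"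
  shows "(take n \<tau> @ drop n \<sigma>)[n := \<tau> ! n] = take (Suc n) \<tau> @ drop (Suc n) \<sigma>"
proof (rule nth_equalityI)
  fix i assume "i < length ((take n \<tau> @ drop n \<sigma>)[n := \<tau> ! n])"
  then show "(take n \<tau> @ drop n \<sigma>)[n := \<tau> ! n] ! i = (take (Suc n) \<tau> @ drop (Suc n) \<sigma>) ! i"
    using assms by (cases "i < n"; cases "i = n") (auto simp: nth_append nth_list_update)
qed (use assms in simp)

text \<open>Locality, iterated over the arguments one at a time via multilinearity.\<close>
lemma current_eq_if_args_eq_near_support:
  assumes mc: "metric_current k T" and f: "dom_ok UNIV k f \<sigma>"
    and \<tau>: "length \<tau> = k" "\<forall>h\<in>set \<tau>. lip_fun UNIV h"
    and W: "open W" "supp_in UNIV f \<subseteq> W" and eq: "\<And>j x. j < k \<Longrightarrow> x \<in> W \<Longrightarrow> (\<sigma> ! j) x = (\<tau> ! j) x"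
  shows "T f \<sigma> = T f \<tau>"
proof -
  have \<sigma>: "length \<sigma> = k" "\<forall>h\<in>set \<sigma>. lip_fun UNIV h" using f unfolding dom_ok_def by auto
  have "T f (take n \<tau> @ drop n \<sigma>) = T f \<sigma>" if "n \<le> k" for n
    using that
  proof (induction n)
    case (Suc n)
    let ?\<rho> = "take n \<tau> @ drop n \<sigma>"
    let ?d = "\<lambda>x. (\<tau> ! n) x - (\<sigma> ! n) x"
    have n: "n < k" using Suc by simp
    have lip: "lip_fun UNIV (\<tau> ! n)" "lip_fun UNIV (\<sigma> ! n)" using \<sigma> \<tau> n by auto
    have \<rho>: "dom_ok UNIV k f ?\<rho>"
      using f \<sigma> \<tau> n unfolding dom_ok_def by (auto dest: in_set_takeD in_set_dropD)
    have "dom_ok UNIV k f (?\<rho>[n := ?d])"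
      using \<rho> lip_fun_diff[OF lip] set_update_subset_insert unfolding dom_ok_def by fastforce
    then have "T f (?\<rho>[n := ?d]) = 0"
      using n eq \<sigma> \<tau> by (intro metric_current_local[OF mc _ n W, where c=0]) auto
    moreover have "T f (?\<rho>[n := ?d]) = T f (?\<rho>[n := \<tau> ! n]) - T f (?\<rho>[n := \<sigma> ! n])"
      using metric_current_diff_arg[OF mc \<rho> n lip] .
    moreover have "?\<rho> ! n = \<sigma> ! n" using \<sigma> \<tau> n by (simp add: nth_append)
    then have "?\<rho>[n := \<sigma> ! n] = ?\<rho>" by (metis list_update_id)
    ultimately show ?case
      using Suc take_append_drop_update[of n \<sigma> \<tau>] \<sigma> \<tau> n by simp
  qed simp
  from this[of k] show ?thesis using \<sigma> \<tau> by simp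
qed

lemma current_diff_le_off_compact:
  assumes mc: "metric_current k T" and fr: "finite_radon_measure \<mu>" and mass: "mass_dominated k T \<mu>"
    and f: "dom_ok UNIV k f \<sigma>" and g: "blip_fun UNIV g"
    and "\<And>j. j < k \<Longrightarrow> C-lipschitz_on UNIV (\<sigma> ! j)" "0 \<le> C"
    and "compact K" "0 \<le> c\<^sub>1" "0 \<le> c\<^sub>2" "\<And>x. cmod (f x - g x) \<le> c\<^sub>1 + c\<^sub>2 * indicator (- K) x"
  shows "cmod (T f \<sigma> - T g \<sigma>) \<le> C ^ k * (c\<^sub>1 * measure \<mu> UNIV + c\<^sub>2 * measure \<mu> (- K))"
proof -
  have "blip_fun UNIV (\<lambda>x. f x - g x)" using f g blip_fun_diff unfolding dom_ok_def by blast
  then have "continuous_on UNIV (\<lambda>x. f x - g x)"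
    unfolding blip_fun_iff using lipschitz_on_continuous_on by blast
  then have "(\<integral>x. cmod (f x - g x) \<partial>\<mu>) \<le> c\<^sub>1 * measure \<mu> UNIV + c\<^sub>2 * measure \<mu> (- K)"
    using assms(8-) by (intro integral_le_off_compact[OF fr])
  then show ?thesis
    using current_diff_le_mass[OF mc mass f g assms(6)] \<open>0 \<le> C\<close>
    by (meson mult_left_mono order_trans zero_le_power)
qed

lemma lipschitz_on_bounded_linear:
  assumes "bounded_linear P" "onorm P \<le> a"
  shows "a-lipschitz_on S P"
proof (rule lipschitz_onI)
  fix x y
  have "dist (P x) (P y) = norm (P (x - y))"
    using assms(1) by (simp add: dist_norm linear_diff bounded_linear.linear)
  also have "\<dots> \<le> a * dist x y"
    using onorm[OF assms(1)] assms(2) by (simp add: dist_norm) (meson mult_right_mono norm_ge_zero order_trans)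
  finally show "dist (P x) (P y) \<le> a * dist x y" .
qed (use assms onorm_pos_le in fastforce)

lemma pushforward_vanishes_below:
  assumes bd: "bidimension J V p q (pushforward P T)"
    and f: "dom_ok UNIV (p + q) f \<pi>" and U: "open U" "supp_in UNIV f \<subseteq> U"
    and degenerate: "holo_degenerate J UNIV p q U \<pi>"
    and g: "blip_fun UNIV g" "\<And>x. f x = 0 \<Longrightarrow> g x = 0"
  shows "T (g \<circ> P) (map (\<lambda>h. h \<circ> P) \<pi>) = 0"
proof -
  have "dom_ok V (p + q) g \<pi>"
    using f g(1) unfolding dom_ok_def blip_fun_def lip_fun_def
    by (meson bounded_subset image_mono lipschitz_on_subset subset_UNIV)
  moreover have "openin (top_of_set V) (U \<inter> V)" using U(1) openin_open by blast
  moreover have "closure {y\<in>V. g y \<noteq> 0} \<subseteq> closure {y\<in>UNIV. f y \<noteq> 0}"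
    using g(2) by (intro closure_mono) auto
  then have "supp_in V g \<subseteq> U \<inter> V" using U(2) unfolding supp_in_def by auto
  moreover have "holo_degenerate J V p q (U \<inter> V) (map (\<lambda>h. h \<circ> id) \<pi>)"
  proof (rule holo_degenerate_comp[OF degenerate])
    show "length \<pi> = p + q" using f unfolding dom_ok_def by simp
    show "holo_on J V (U \<inter> V) (h \<circ> id)" if "holo_on J UNIV U h" for h
      using holo_on_restrict[OF that] by simp
  qed
  ultimately have "pushforward P T g \<pi> = 0" by (intro bidimensionD[OF bd]) simp_all
  then show ?thesis unfolding pushforward_def by simp
qed

lemma current_diff_comp_le:
  assumes mc: "metric_current k T" and fr: "finite_radon_measure \<mu>" and mass: "mass_dominated k T \<mu>"
    and g: "dom_ok UNIV k g \<tau>" "L\<^sub>g-lipschitz_on UNIV g" "\<And>x. cmod (g x) \<le> B"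
    and \<tau>: "\<And>j. j < k \<Longrightarrow> C-lipschitz_on UNIV (\<tau> ! j)" "0 \<le> C"
    and P: "a-lipschitz_on UNIV P" "\<And>z. z \<in> K \<Longrightarrow> norm (P z - z) \<le> e" "0 \<le> e" and "compact K"
  shows "cmod (T g \<tau> - T (g \<circ> P) \<tau>) \<le> C ^ k * (L\<^sub>g * e * measure \<mu> UNIV + 2 * B * measure \<mu> (- K))"
proof (rule current_diff_le_off_compact[OF mc fr mass g(1) _ \<tau> \<open>compact K\<close>])
  have "(L\<^sub>g * a)-lipschitz_on UNIV (g \<circ> P)"
    using g(2) lipschitz_on_subset P(1) by (intro lipschitz_on_compose) blast+
  then show "blip_fun UNIV (g \<circ> P)" unfolding blip_fun_iff using g(3) by auto
  show nonneg: "0 \<le> L\<^sub>g * e" "0 \<le> 2 * B"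
    using lipschitz_on_nonneg[OF g(2)] \<open>0 \<le> e\<close> order_trans[OF norm_ge_zero g(3)] by simp_all
  fix x
  show "cmod (g x - (g \<circ> P) x) \<le> L\<^sub>g * e + 2 * B * indicator (- K) x"
  proof (cases "x \<in> K")
    case True
    have "cmod (g x - (g \<circ> P) x) \<le> L\<^sub>g * norm (P x - x)"
      using lipschitz_onD[OF g(2), of x "P x"] by (simp add: dist_norm norm_minus_commute)
    also have "\<dots> \<le> L\<^sub>g * e" using P(2)[OF True] lipschitz_on_nonneg[OF g(2)] by (rule mult_left_mono)
    finally show ?thesis using True by simp
  next
    case False
    have "cmod (g x - (g \<circ> P) x) \<le> 2 * B"
      using norm_triangle_ineq4[of "g x" "g (P x)"] g(3)[of x] g(3)[of "P x"] by simp
    then show ?thesis using False nonneg(1) by simp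
  qed
qed

lemma error_terms_le:
  fixes C\<^sub>1 C\<^sub>2 B L\<^sub>f M m e \<delta> :: real
  assumes "0 \<le> C\<^sub>1" "0 \<le> C\<^sub>2" "0 \<le> B" "0 \<le> L\<^sub>f" "0 \<le> M"
    and "0 < \<delta>" "\<delta> \<le> 1" "e \<le> \<delta>\<^sup>2" "m \<le> \<delta>"
  shows "C\<^sub>1 * (B * m) + C\<^sub>2 * ((L\<^sub>f + B * (4 / \<delta>)) * e * M + 2 * B * m)
    \<le> (C\<^sub>1 * B + C\<^sub>2 * ((L\<^sub>f + 4 * B) * M + 2 * B)) * \<delta>"
proof -
  have "(L\<^sub>f + B * (4 / \<delta>)) * e \<le> (L\<^sub>f + B * (4 / \<delta>)) * \<delta>\<^sup>2"
    using assms by (intro mult_left_mono) auto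
  also have "\<dots> = L\<^sub>f * \<delta> * \<delta> + 4 * B * \<delta>" using assms(6) by (simp add: power2_eq_square field_simps)
  also have "\<dots> \<le> (L\<^sub>f + 4 * B) * \<delta>"
    using mult_left_mono[OF mult_left_le[OF assms(7) less_imp_le[OF assms(6)]] assms(4)]
    by (simp add: algebra_simps)
  finally have "(L\<^sub>f + B * (4 / \<delta>)) * e * M \<le> (L\<^sub>f + 4 * B) * \<delta> * M"
    using assms(5) by (rule mult_right_mono)
  moreover have "2 * B * m \<le> 2 * B * \<delta>" using assms(3,9) by (simp add: mult_left_mono)
  ultimately have "C\<^sub>1 * (B * m) + C\<^sub>2 * ((L\<^sub>f + B * (4 / \<delta>)) * e * M + 2 * B * m)
      \<le> C\<^sub>1 * (B * \<delta>) + C\<^sub>2 * ((L\<^sub>f + 4 * B) * \<delta> * M + 2 * B * \<delta>)"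
    using assms(1-3,9) by (intro add_mono mult_left_mono) auto
  also have "\<dots> = (C\<^sub>1 * B + C\<^sub>2 * ((L\<^sub>f + 4 * B) * M + 2 * B)) * \<delta>" by (simp add: algebra_simps)
  finally show ?thesis .
qed

text \<open>Cutting \<open>f\<close> off near \<open>K\<close> costs mass outside \<open>K\<close>; then by locality the arguments
  \<open>h \<circ> proj_near K \<delta> P\<close> may be replaced by \<open>h \<circ> P\<close>; replacing the cut-off function \<open>g\<close> by \<open>g \<circ> P\<close>
  costs \<open>e\<close> on \<open>K\<close> and mass outside \<open>K\<close>; and the result is a value of the pushforward under \<open>P\<close>.\<close>
lemma current_comp_proj_near_le:
  fixes T :: "('a::real_normed_vector \<Rightarrow> complex) \<Rightarrow> ('a \<Rightarrow> complex) list \<Rightarrow> complex"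
  assumes mc: "metric_current k T" and fr: "finite_radon_measure \<mu>" and mass: "mass_dominated k T \<mu>"
    and f: "dom_ok UNIV k f \<pi>" and L: "\<And>j. j < k \<Longrightarrow> L-lipschitz_on UNIV (\<pi> ! j)" "0 \<le> L"
    and Lf: "L\<^sub>f-lipschitz_on UNIV f" and B: "\<And>x. cmod (f x) \<le> B"
    and near: "proj_near_setup K P a e \<delta>" and "compact K"
    and small: "e \<le> \<delta>\<^sup>2" "measure \<mu> (- K) \<le> \<delta>" "\<delta> \<le> 1"
    and vanish: "\<And>g. blip_fun UNIV g \<Longrightarrow> (\<And>x. f x = 0 \<Longrightarrow> g x = 0) \<Longrightarrow>
      T (g \<circ> P) (map (\<lambda>h. h \<circ> P) \<pi>) = 0"
  shows "cmod (T f (map (\<lambda>h. h \<circ> proj_near K \<delta> P) \<pi>))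
    \<le> ((L * (3 * a + 5)) ^ k * B + (L * a) ^ k * ((L\<^sub>f + 4 * B) * measure \<mu> UNIV + 2 * B)) * \<delta>"
proof -
  interpret proj_near_setup K P a e \<delta> by (rule near)
  define g where "g = cut_near K \<delta> f"
  define \<sigma> where "\<sigma> = map (\<lambda>h. h \<circ> proj_near K \<delta> P) \<pi>"
  define \<tau> where "\<tau> = map (\<lambda>h. h \<circ> P) \<pi>"
  have len: "length \<pi> = k" "length \<sigma> = k" "length \<tau> = k"
    using f unfolding dom_ok_def \<sigma>_def \<tau>_def by auto
  have B0: "0 \<le> B" using B[of 0] norm_ge_zero order_trans by blast
  have P: "a-lipschitz_on UNIV P" by (rule lipschitz_on_bounded_linear[OF bounded_linear onorm_le])
  have gL: "(L\<^sub>f + B * (4 / \<delta>))-lipschitz_on UNIV g"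
    unfolding g_def using Lf B pos by (rule cut_near_lipschitz)
  have gB: "cmod (g x) \<le> B" for x unfolding g_def using B by (rule norm_cut_near_le)
  have g: "blip_fun UNIV g" unfolding blip_fun_iff using gL gB by blast
  have \<sigma>L: "(L * (3 * a + 5))-lipschitz_on UNIV (\<sigma> ! j)" if "j < k" for j
    unfolding \<sigma>_def using L(1) len that by (intro lipschitz_on_map_comp proj_near_lipschitz) auto
  have \<tau>L: "(L * a)-lipschitz_on UNIV (\<tau> ! j)" if "j < k" for j
    unfolding \<tau>_def using L(1) len that P by (intro lipschitz_on_map_comp) auto
  have "\<forall>h\<in>set \<sigma>. lip_fun UNIV h" "\<forall>h\<in>set \<tau>. lip_fun UNIV h"
    using \<sigma>L \<tau>L len by (auto intro!: lip_fun_set_if_lipschitz)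
  then have f\<sigma>: "dom_ok UNIV k f \<sigma>" and g\<sigma>: "dom_ok UNIV k g \<sigma>" and g\<tau>: "dom_ok UNIV k g \<tau>"
    using f g len unfolding dom_ok_def by auto
  have cut: "cmod (T f \<sigma> - T g \<sigma>) \<le> (L * (3 * a + 5)) ^ k * (0 * measure \<mu> UNIV + B * measure \<mu> (- K))"
  proof (rule current_diff_le_off_compact[OF mc fr mass f\<sigma> g \<sigma>L _ \<open>compact K\<close> order_refl B0])
    show "cmod (f x - g x) \<le> 0 + B * indicator (- K) x" for x
      using norm_diff_cut_near_le[OF B pos] unfolding g_def by simp
  qed (use L(2) bound_nonneg in \<open>auto intro: mult_nonneg_nonneg\<close>)
  have local: "T g \<sigma> = T g \<tau>"
  proof (rule current_eq_if_args_eq_near_support[OF mc g\<sigma> len(3)])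
    show "\<forall>h\<in>set \<tau>. lip_fun UNIV h" using g\<tau> unfolding dom_ok_def by simp
    show "open {x. infdist x K < \<delta>}" by (intro open_Collect_less continuous_intros)
    show "supp_in UNIV g \<subseteq> {x. infdist x K < \<delta>}" unfolding g_def using pos by (rule supp_in_cut_near)
    show "(\<sigma> ! j) x = (\<tau> ! j) x" if "j < k" "x \<in> {x. infdist x K < \<delta>}" for j x
      using that len proj_near_eq unfolding \<sigma>_def \<tau>_def by auto
  qed
  have shift: "cmod (T g \<tau> - T (g \<circ> P) \<tau>)
      \<le> (L * a) ^ k * ((L\<^sub>f + B * (4 / \<delta>)) * e * measure \<mu> UNIV + 2 * B * measure \<mu> (- K))"
    using L(2) bound_nonneg e_nonneg moves_K
    by (intro current_diff_comp_le[OF mc fr mass g\<tau> gL gB \<tau>L _ P _ _ \<open>compact K\<close>]) auto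
  have "T (g \<circ> P) \<tau> = 0" unfolding \<tau>_def g_def using g[unfolded g_def]
    by (rule vanish) (simp add: cut_near_def)
  with local have "cmod (T f \<sigma>) \<le> cmod (T f \<sigma> - T g \<sigma>) + cmod (T g \<tau> - T (g \<circ> P) \<tau>)"
    by (metis diff_zero norm_triangle_ineq diff_add_cancel add_diff_eq)
  also have "\<dots> \<le> (L * (3 * a + 5)) ^ k * (B * measure \<mu> (- K))
      + (L * a) ^ k * ((L\<^sub>f + B * (4 / \<delta>)) * e * measure \<mu> UNIV + 2 * B * measure \<mu> (- K))"
    using cut shift by simp
  also have "\<dots> \<le> ((L * (3 * a + 5)) ^ k * B + (L * a) ^ k * ((L\<^sub>f + 4 * B) * measure \<mu> UNIV + 2 * B)) * \<delta>"
    using L(2) bound_nonneg B0 lipschitz_on_nonneg[OF Lf] pos small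
    by (intro error_terms_le) auto
  finally show ?thesis unfolding \<sigma>_def .
qed

lemma tendsto_comp_proj_near:
  fixes h :: "'a::real_normed_vector \<Rightarrow> 'b::real_normed_vector"
  assumes near: "\<And>n. proj_near_setup (K n) (p n) a (e n) (\<delta> n)" and "\<delta> \<longlonglongrightarrow> 0"
    and h: "L-lipschitz_on UNIV h"
  shows "(\<lambda>n. h (proj_near (K n) (\<delta> n) (p n) x)) \<longlonglongrightarrow> h x"
proof -
  have bound: "norm (h (proj_near (K n) (\<delta> n) (p n) x) - h x) \<le> L * ((2 * a + 3) * \<delta> n)" for n
  proof -
    have "norm (h (proj_near (K n) (\<delta> n) (p n) x) - h x) \<le> L * norm (proj_near (K n) (\<delta> n) (p n) x - x)"
      using lipschitz_onD[OF h] by (simp add: dist_norm)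
    also have "\<dots> \<le> L * ((2 * a + 3) * \<delta> n)"
      using proj_near_setup.proj_near_dist_le[OF near] lipschitz_on_nonneg[OF h] by (rule mult_left_mono)
    finally show ?thesis .
  qed
  have "(\<lambda>n. L * ((2 * a + 3) * \<delta> n)) \<longlonglongrightarrow> 0"
    using \<open>\<delta> \<longlonglongrightarrow> 0\<close> by (intro tendsto_mult_right_zero)
  then have "(\<lambda>n. h (proj_near (K n) (\<delta> n) (p n) x) - h x) \<longlonglongrightarrow> 0"
    by (rule Lim_null_comparison[OF always_eventually[OF allI[OF bound]]])
  then show ?thesis by (rule LIM_zero_cancel)
qed

lemma current_comp_proj_near_tendsto:
  assumes mc: "metric_current k T" and f: "dom_ok UNIV k f \<pi>"
    and L: "\<And>j. j < k \<Longrightarrow> L-lipschitz_on UNIV (\<pi> ! j)"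
    and near: "\<And>n. proj_near_setup (K n) (p n) a (e n) (\<delta> n)" and "\<delta> \<longlonglongrightarrow> 0"
  shows "(\<lambda>n. T f (map (\<lambda>h. h \<circ> proj_near (K n) (\<delta> n) (p n)) \<pi>)) \<longlonglongrightarrow> T f \<pi>"
proof -
  define \<sigma> where "\<sigma> n = map (\<lambda>h. h \<circ> proj_near (K n) (\<delta> n) (p n)) \<pi>" for n
  have len: "length \<pi> = k" "length (\<sigma> n) = k" for n using f unfolding dom_ok_def \<sigma>_def by auto
  have \<sigma>L: "(L * (3 * a + 5))-lipschitz_on UNIV (\<sigma> n ! j)" if "j < k" for n j
    unfolding \<sigma>_def using L len that proj_near_setup.proj_near_lipschitz[OF near]
    by (intro lipschitz_on_map_comp) auto
  have "\<forall>h\<in>set (\<sigma> n). lip_fun UNIV h" for n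
    by (rule lip_fun_set_if_lipschitz[where L="L * (3 * a + 5)"]) (simp add: len \<sigma>L)
  then have \<sigma>: "dom_ok UNIV k f (\<sigma> n)" for n using f len unfolding dom_ok_def by auto
  have "(\<lambda>n. T f (\<sigma> n)) \<longlonglongrightarrow> T f \<pi>"
  proof (rule metric_current_continuous[OF mc f \<sigma> _ \<sigma>L])
    show "(\<lambda>n. (\<sigma> n ! j) x) \<longlonglongrightarrow> (\<pi> ! j) x" if "j < k" for j x
      unfolding \<sigma>_def using len that tendsto_comp_proj_near[OF near \<open>\<delta> \<longlonglongrightarrow> 0\<close> L] by simp
  qed
  then show ?thesis unfolding \<sigma>_def .
qed

lemma approximating_projections_tight_sequence:
  assumes fr: "finite_radon_measure \<mu>" and ap: "approximating_projections \<E> P a"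
    and \<delta>: "\<And>n. 0 < \<delta> n" "\<And>n. \<delta> n \<le> 1"
  obtains K V where "\<And>n. proj_near_setup (K n) (P (V n)) a ((\<delta> n)\<^sup>2) (\<delta> n)"
    "\<And>n. compact (K n)" "\<And>n. measure \<mu> (- K n) \<le> \<delta> n" "\<And>n. V n \<in> \<E>"
proof -
  have "\<forall>n. \<exists>K V. compact K \<and> K \<noteq> {} \<and> measure \<mu> (- K) \<le> \<delta> n \<and> V \<in> \<E> \<and>
      (\<forall>x\<in>K. norm (P V x - x) \<le> (\<delta> n)\<^sup>2)"
  proof
    fix n
    show "\<exists>K V. compact K \<and> K \<noteq> {} \<and> measure \<mu> (- K) \<le> \<delta> n \<and> V \<in> \<E> \<and>
        (\<forall>x\<in>K. norm (P V x - x) \<le> (\<delta> n)\<^sup>2)"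
      by (rule approximating_projections_tight[OF fr ap \<delta>(1)]) blast
  qed
  then obtain K where "\<forall>n. \<exists>V. compact (K n) \<and> K n \<noteq> {} \<and> measure \<mu> (- K n) \<le> \<delta> n \<and> V \<in> \<E> \<and>
      (\<forall>x\<in>K n. norm (P V x - x) \<le> (\<delta> n)\<^sup>2)"
    by (rule choice[THEN exE])
  then obtain V where KV: "\<forall>n. compact (K n) \<and> K n \<noteq> {} \<and> measure \<mu> (- K n) \<le> \<delta> n \<and> V n \<in> \<E> \<and>
      (\<forall>x\<in>K n. norm (P (V n) x - x) \<le> (\<delta> n)\<^sup>2)"
    by (rule choice[THEN exE])
  have near: "proj_near_setup (K n) (P (V n)) a ((\<delta> n)\<^sup>2) (\<delta> n)" for n
  proof (rule proj_near_setup.intro)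
    show "bounded_linear (P (V n))" "onorm (P (V n)) \<le> a"
      using ap KV unfolding approximating_projections_def by auto
    show "(\<delta> n)\<^sup>2 \<le> \<delta> n" "0 < \<delta> n"
      using \<delta>(1,2)[of n] by (simp_all add: power2_eq_square mult_left_le)
  qed (use KV in auto)
  show ?thesis
    by (rule that[OF near]) (use KV in auto)
qed

lemma bidimension_if_pushforwards_bidimension:
  fixes J :: "'a::real_normed_vector \<Rightarrow> 'a"
  assumes pap: "projective_approx_property J" and mc: "metric_current (p + q) T"
    and pushforwards: "\<And>V P. csubspace J V \<Longrightarrow> fin_dim V \<Longrightarrow> clin_projection J V P \<Longrightarrow>
      bidimension J V p q (pushforward P T)"
  shows "bidimension J UNIV p q T"
proof (rule bidimensionI)
  fix f \<pi> U
  assume f: "dom_ok UNIV (p + q) f \<pi>" and U: "openin (top_of_set UNIV) U" "supp_in UNIV f \<subseteq> U"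
    and degenerate: "holo_degenerate J UNIV p q U \<pi>"
  obtain \<E> P a where ap: "approximating_projections \<E> P a"
    and \<E>: "\<And>V. V \<in> \<E> \<Longrightarrow> csubspace J V \<and> fin_dim V \<and> clin_projection J V (P V)"
    using projective_approx_propertyE[OF pap] by blast
  obtain \<mu> where fr: "finite_radon_measure \<mu>" and mass: "mass_dominated (p + q) T \<mu>"
    using mc by (rule metric_current_massE)
  have len: "length \<pi> = p + q" and lip: "\<forall>h\<in>set \<pi>. lip_fun UNIV h"
    using f unfolding dom_ok_def by auto
  obtain L where L: "0 \<le> L" "\<And>j. j < p + q \<Longrightarrow> L-lipschitz_on UNIV (\<pi> ! j)"
    using lipschitz_on_common_bound[OF lip] unfolding len by blast
  obtain L\<^sub>f B where Lf: "L\<^sub>f-lipschitz_on UNIV f" and B: "\<And>x. cmod (f x) \<le> B"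
    using f unfolding dom_ok_def blip_fun_iff by auto
  define \<delta> where "\<delta> n = 1 / real (Suc n)" for n
  have \<delta>: "0 < \<delta> n" "\<delta> n \<le> 1" for n unfolding \<delta>_def by simp_all
  have "\<delta> \<longlonglongrightarrow> 0" unfolding \<delta>_def by (rule LIMSEQ_Suc[OF lim_const_over_n])
  obtain K V where near: "\<And>n. proj_near_setup (K n) (P (V n)) a ((\<delta> n)\<^sup>2) (\<delta> n)"
    and K: "\<And>n. compact (K n)" "\<And>n. measure \<mu> (- K n) \<le> \<delta> n" and V: "\<And>n. V n \<in> \<E>"
    using approximating_projections_tight_sequence[OF fr ap, where \<delta>=\<delta>, OF \<delta>] by blast
  define \<sigma> where "\<sigma> n = map (\<lambda>h. h \<circ> proj_near (K n) (\<delta> n) (P (V n))) \<pi>" for n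
  have "(\<lambda>n. T f (\<sigma> n)) \<longlonglongrightarrow> T f \<pi>"
    unfolding \<sigma>_def using mc f L(2) near \<open>\<delta> \<longlonglongrightarrow> 0\<close> by (rule current_comp_proj_near_tendsto)
  moreover have "(\<lambda>n. T f (\<sigma> n)) \<longlonglongrightarrow> 0"
  proof (rule Lim_null_comparison[OF always_eventually])
    define D where "D = (L * (3 * a + 5)) ^ (p + q) * B + (L * a) ^ (p + q) * ((L\<^sub>f + 4 * B) * measure \<mu> UNIV + 2 * B)"
    show "\<forall>n. norm (T f (\<sigma> n)) \<le> D * \<delta> n"
      unfolding \<sigma>_def D_def
    proof (intro allI current_comp_proj_near_le[OF mc fr mass f L(2) L(1) Lf B near K(1)])
      fix n g assume g: "blip_fun UNIV g" "\<And>x. f x = 0 \<Longrightarrow> g x = 0"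
      have "bidimension J (V n) p q (pushforward (P (V n)) T)"
        using \<E>[OF V] by (intro pushforwards) auto
      then show "T (g \<circ> P (V n)) (map (\<lambda>h. h \<circ> P (V n)) \<pi>) = 0"
        by (rule pushforward_vanishes_below[OF _ f _ U(2) degenerate g]) (use U(1) in simp)
    qed (use K(2) \<delta>(2) in auto)
    show "(\<lambda>n. D * \<delta> n) \<longlonglongrightarrow> 0" using \<open>\<delta> \<longlonglongrightarrow> 0\<close> by (rule tendsto_mult_right_zero)
  qed
  ultimately show "T f \<pi> = 0" by (rule LIMSEQ_unique)
qed

theorem proposition5p5:
  fixes J :: "'a::banach \<Rightarrow> 'a"
    and T :: "('a \<Rightarrow> complex) \<Rightarrow> ('a \<Rightarrow> complex) list \<Rightarrow> complex"
    and k p q :: nat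
  assumes "complex_structure J"
    and "projective_approx_property J"
    and "metric_current k T"
    and "p + q = k"
  shows "bidimension J UNIV p q T \<longleftrightarrow>
    (\<forall>V P. csubspace J V \<and> fin_dim V \<and> clin_projection J V P \<longrightarrow>
       bidimension J V p q (pushforward P T))"
proof
  assume "bidimension J UNIV p q T"
  then show "\<forall>V P. csubspace J V \<and> fin_dim V \<and> clin_projection J V P \<longrightarrow>
      bidimension J V p q (pushforward P T)"
    using bidimension_pushforward by blast
next
  assume "\<forall>V P. csubspace J V \<and> fin_dim V \<and> clin_projection J V P \<longrightarrow>
      bidimension J V p q (pushforward P T)"
  then show "bidimension J UNIV p q T"
    using assms(3,4) by (intro bidimension_if_pushforwards_bidimension[OF assms(2)]) auto
qed

end
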